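(* If $\Lambda$ is a quotient group of a group $\Gamma$, then $\mathrm{Lit}(\Lambda)\le\mathrm{Lit}(\Gamma)$.
   Context: $T_1(\Gamma)$ is the space of all $f\colon\Gamma\to\mathbf{C}$ for which there exist $f_1,f_2\colon\Gamma\times\Gamma\to\mathbf{C}$ with $f(x^{-1}y)=f_1(x,y)+f_2(x,y)$ for all $x,y$, $\sup_x\sum_y|f_1(x,y)|<\infty$, $\sup_y\sum_x|f_2(x,y)|<\infty$; $\mathrm{Lit}(\Gamma)=\inf\{p>0:T_1(\Gamma)\subseteq\ell^p(\Gamma)\}\in[0,\infty]$. *)

theory Defs
  imports "HOL-Analysis.Analysis" "HOL-Algebra.Group"
begin

definition T1 :: "('a, 'b) monoid_scheme \<Rightarrow> ('a \<Rightarrow> complex) set" where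
  "T1 G = {f. \<exists>f1 f2 :: 'a \<Rightarrow> 'a \<Rightarrow> complex.
      (\<forall>x\<in>carrier G. \<forall>y\<in>carrier G. f (inv\<^bsub>G\<^esub> x \<otimes>\<^bsub>G\<^esub> y) = f1 x y + f2 x y) \<and>
      (SUP x\<in>carrier G. \<Sum>\<^sub>\<infinity>y\<in>carrier G. ennreal (norm (f1 x y))) < \<infinity> \<and>
      (SUP y\<in>carrier G. \<Sum>\<^sub>\<infinity>x\<in>carrier G. ennreal (norm (f2 x y))) < \<infinity>}"

definition lp :: "('a, 'b) monoid_scheme \<Rightarrow> real \<Rightarrow> ('a \<Rightarrow> complex) set" where
  "lp G p = {f. (\<Sum>\<^sub>\<infinity>x\<in>carrier G. ennreal (norm (f x) powr p)) < \<infinity>}"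

text \<open>Lit(G) = inf {p > 0. T1(G) \<subseteq> ell^p(G)} in [0, infinity] (empty inf = infinity).\<close>
definition Lit :: "('a, 'b) monoid_scheme \<Rightarrow> ennreal" where
  "Lit G = (INF p\<in>{p::real. p > 0 \<and> T1 G \<subseteq> lp G p}. ennreal p)"

end

theory Submission
  imports Defs
begin

text \<open>Choose a set S of representatives for the fibres of the quotient map h. Any f in T1 of
the quotient pulls back to the function F that is f \<circ> h on S and 0 elsewhere; its kernel
decomposition is pulled back the same way, cut off to pairs (x, y) with x\<inverse> y \<in> S. Since a
translate of S still meets each fibre of h at most once, each row and column sum of the lifted
kernels is dominated by a row or column sum of the original ones, so F lies in T1 of the group. Moreover h maps S
bijectively onto the quotient, so F and f have the same l^p-norm. Hence every exponent p with
T1 \<subseteq> l^p for the group also works for the quotient.\<close>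

lemma obtain_inj_on_subset_same_image:
  obtains S where "S \<subseteq> A" "inj_on f S" "f ` S = f ` A"
proof
  show "inv_into A f ` f ` A \<subseteq> A"
    by (auto intro: inv_into_into)
  show "inj_on f (inv_into A f ` f ` A)"
    by (rule inj_onI) (auto simp: f_inv_into_f)
  show "f ` inv_into A f ` f ` A = f ` A"
    by (force simp: image_image f_inv_into_f)
qed

lemma ennreal_infsum_reindex_le:
  fixes g :: "'b \<Rightarrow> ennreal"
  assumes "inj_on h A" "h ` A \<subseteq> B"
  shows "(\<Sum>\<^sub>\<infinity>y\<in>A. g (h y)) \<le> (\<Sum>\<^sub>\<infinity>z\<in>B. g z)"
proof -
  have "(\<Sum>\<^sub>\<infinity>y\<in>A. g (h y)) = (\<Sum>\<^sub>\<infinity>z\<in>h ` A. g z)"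
    using infsum_reindex[OF assms(1), of g] by (simp add: o_def)
  also have "\<dots> \<le> (\<Sum>\<^sub>\<infinity>z\<in>B. g z)"
    by (rule infsum_mono_neutral) (use assms(2) in \<open>auto intro: nonneg_summable_on_complete\<close>)
  finally show ?thesis .
qed

context group_hom
begin

lemma inj_on_left_translate_preimage:
  assumes "inj_on h S" "x \<in> carrier G"
  shows "inj_on h {y \<in> carrier G. inv\<^bsub>G\<^esub> x \<otimes>\<^bsub>G\<^esub> y \<in> S}" (is "inj_on h ?A")
proof (rule inj_onI)
  fix a b assume a: "a \<in> ?A" and b: "b \<in> ?A" and "h a = h b"
  then have "h (inv\<^bsub>G\<^esub> x \<otimes>\<^bsub>G\<^esub> a) = h (inv\<^bsub>G\<^esub> x \<otimes>\<^bsub>G\<^esub> b)"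
    using \<open>x \<in> carrier G\<close> by simp
  with assms(1) a b have "inv\<^bsub>G\<^esub> x \<otimes>\<^bsub>G\<^esub> a = inv\<^bsub>G\<^esub> x \<otimes>\<^bsub>G\<^esub> b"
    by (auto dest: inj_onD)
  with a b \<open>x \<in> carrier G\<close> show "a = b" by simp
qed

lemma inj_on_right_translate_preimage:
  assumes "inj_on h S" "y \<in> carrier G"
  shows "inj_on h {x \<in> carrier G. inv\<^bsub>G\<^esub> x \<otimes>\<^bsub>G\<^esub> y \<in> S}" (is "inj_on h ?A")
proof (rule inj_onI)
  fix a b assume a: "a \<in> ?A" and b: "b \<in> ?A" and "h a = h b"
  then have "h (inv\<^bsub>G\<^esub> a \<otimes>\<^bsub>G\<^esub> y) = h (inv\<^bsub>G\<^esub> b \<otimes>\<^bsub>G\<^esub> y)"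
    using \<open>y \<in> carrier G\<close> by simp
  with assms(1) a b have "inv\<^bsub>G\<^esub> a \<otimes>\<^bsub>G\<^esub> y = inv\<^bsub>G\<^esub> b \<otimes>\<^bsub>G\<^esub> y"
    by (auto dest: inj_onD)
  with a b \<open>y \<in> carrier G\<close> show "a = b"
    by (metis (no_types, lifting) G.inv_closed G.inv_inv G.right_cancel mem_Collect_eq)
qed

lemma infsum_lifted_row_le:
  assumes "inj_on h S" "x \<in> carrier G"
  shows "(\<Sum>\<^sub>\<infinity>y\<in>carrier G. ennreal (norm (if inv\<^bsub>G\<^esub> x \<otimes>\<^bsub>G\<^esub> y \<in> S then k (h x) (h y) else 0)))
    \<le> (\<Sum>\<^sub>\<infinity>z\<in>carrier H. ennreal (norm (k (h x) z)))"
proof -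
  let ?A = "{y \<in> carrier G. inv\<^bsub>G\<^esub> x \<otimes>\<^bsub>G\<^esub> y \<in> S}"
  have "(\<Sum>\<^sub>\<infinity>y\<in>carrier G. ennreal (norm (if inv\<^bsub>G\<^esub> x \<otimes>\<^bsub>G\<^esub> y \<in> S then k (h x) (h y) else 0)))
      = (\<Sum>\<^sub>\<infinity>y\<in>?A. ennreal (norm (k (h x) (h y))))"
    by (rule infsum_cong_neutral) auto
  also have "\<dots> \<le> (\<Sum>\<^sub>\<infinity>z\<in>carrier H. ennreal (norm (k (h x) z)))"
    using inj_on_left_translate_preimage[OF assms] by (rule ennreal_infsum_reindex_le) auto
  finally show ?thesis .
qed

lemma infsum_lifted_column_le:
  assumes "inj_on h S" "y \<in> carrier G"
  shows "(\<Sum>\<^sub>\<infinity>x\<in>carrier G. ennreal (norm (if inv\<^bsub>G\<^esub> x \<otimes>\<^bsub>G\<^esub> y \<in> S then k (h x) (h y) else 0)))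
    \<le> (\<Sum>\<^sub>\<infinity>z\<in>carrier H. ennreal (norm (k z (h y))))"
proof -
  let ?A = "{x \<in> carrier G. inv\<^bsub>G\<^esub> x \<otimes>\<^bsub>G\<^esub> y \<in> S}"
  have "(\<Sum>\<^sub>\<infinity>x\<in>carrier G. ennreal (norm (if inv\<^bsub>G\<^esub> x \<otimes>\<^bsub>G\<^esub> y \<in> S then k (h x) (h y) else 0)))
      = (\<Sum>\<^sub>\<infinity>x\<in>?A. ennreal (norm (k (h x) (h y))))"
    by (rule infsum_cong_neutral) auto
  also have "\<dots> \<le> (\<Sum>\<^sub>\<infinity>z\<in>carrier H. ennreal (norm (k z (h y))))"
    using inj_on_right_translate_preimage[OF assms]
    by (rule ennreal_infsum_reindex_le[where g = "\<lambda>z. ennreal (norm (k z (h y)))"]) auto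
  finally show ?thesis .
qed

lemma lift_in_T1:
  assumes "f \<in> T1 H" "inj_on h S"
  shows "(\<lambda>g. if g \<in> S then f (h g) else 0) \<in> T1 G"
proof -
  obtain f1 f2 where
    dec: "\<And>x y. x \<in> carrier H \<Longrightarrow> y \<in> carrier H \<Longrightarrow> f (inv\<^bsub>H\<^esub> x \<otimes>\<^bsub>H\<^esub> y) = f1 x y + f2 x y"
    and rows: "(SUP x\<in>carrier H. \<Sum>\<^sub>\<infinity>y\<in>carrier H. ennreal (norm (f1 x y))) < \<infinity>"
    and columns: "(SUP y\<in>carrier H. \<Sum>\<^sub>\<infinity>x\<in>carrier H. ennreal (norm (f2 x y))) < \<infinity>"
    using assms(1) unfolding T1_def by blast
  let ?lift = "\<lambda>k x y. if inv\<^bsub>G\<^esub> x \<otimes>\<^bsub>G\<^esub> y \<in> S then k (h x) (h y) else 0"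
  show ?thesis
    unfolding T1_def
  proof (intro CollectI exI conjI ballI)
    fix x y assume "x \<in> carrier G" "y \<in> carrier G"
    then show "(if inv\<^bsub>G\<^esub> x \<otimes>\<^bsub>G\<^esub> y \<in> S then f (h (inv\<^bsub>G\<^esub> x \<otimes>\<^bsub>G\<^esub> y)) else 0)
        = ?lift f1 x y + ?lift f2 x y"
      using dec by simp
  next
    have "(SUP x\<in>carrier G. \<Sum>\<^sub>\<infinity>y\<in>carrier G. ennreal (norm (?lift f1 x y)))
        \<le> (SUP x\<in>carrier H. \<Sum>\<^sub>\<infinity>y\<in>carrier H. ennreal (norm (f1 x y)))"
      using infsum_lifted_row_le[OF assms(2), where k = f1]
      by (intro SUP_least SUP_upper2[OF hom_closed]) auto
    then show "(SUP x\<in>carrier G. \<Sum>\<^sub>\<infinity>y\<in>carrier G. ennreal (norm (?lift f1 x y))) < \<infinity>"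
      using rows by (rule le_less_trans)
  next
    have "(SUP y\<in>carrier G. \<Sum>\<^sub>\<infinity>x\<in>carrier G. ennreal (norm (?lift f2 x y)))
        \<le> (SUP y\<in>carrier H. \<Sum>\<^sub>\<infinity>x\<in>carrier H. ennreal (norm (f2 x y)))"
      using infsum_lifted_column_le[OF assms(2), where k = f2]
      by (intro SUP_least SUP_upper2[OF hom_closed]) auto
    then show "(SUP y\<in>carrier G. \<Sum>\<^sub>\<infinity>x\<in>carrier G. ennreal (norm (?lift f2 x y))) < \<infinity>"
      using columns by (rule le_less_trans)
  qed
qed

end

lemma lift_in_lp_iff:
  assumes "S \<subseteq> carrier G" "inj_on h S" "h ` S = carrier H"
  shows "(\<lambda>g. if g \<in> S then f (h g) else 0) \<in> lp G p \<longleftrightarrow> f \<in> lp H p"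
proof -
  have "(\<Sum>\<^sub>\<infinity>g\<in>carrier G. ennreal (norm (if g \<in> S then f (h g) else 0) powr p))
      = (\<Sum>\<^sub>\<infinity>g\<in>S. ennreal (norm (f (h g)) powr p))"
    by (rule infsum_cong_neutral) (use assms(1) in auto)
  also have "\<dots> = (\<Sum>\<^sub>\<infinity>z\<in>carrier H. ennreal (norm (f z) powr p))"
    using infsum_reindex[OF assms(2), of "\<lambda>z. ennreal (norm (f z) powr p)"] assms(3)
    by (simp add: o_def)
  finally show ?thesis
    unfolding lp_def by simp
qed

lemma (in group_hom) T1_subset_lp_quotient:
  assumes "h ` carrier G = carrier H" "T1 G \<subseteq> lp G p"
  shows "T1 H \<subseteq> lp H p"
proof
  fix f assume "f \<in> T1 H"
  obtain S where S: "S \<subseteq> carrier G" "inj_on h S" "h ` S = carrier H"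
    using obtain_inj_on_subset_same_image[of "carrier G" h] assms(1) by metis
  then have "(\<lambda>g. if g \<in> S then f (h g) else 0) \<in> lp G p"
    using lift_in_T1[OF \<open>f \<in> T1 H\<close>] assms(2) by blast
  with S show "f \<in> lp H p"
    by (simp add: lift_in_lp_iff)
qed

theorem proposition3p5:
  fixes G :: "('a, 'c) monoid_scheme" and H :: "('b, 'd) monoid_scheme"
  assumes "group G" and "group H"
    and "h \<in> hom G H" and "h ` carrier G = carrier H"
  shows "Lit H \<le> Lit G"
proof -
  interpret group_hom G H h
    using assms(1-3) by (simp add: group_hom_def group_hom_axioms_def)
  have "{p. p > 0 \<and> T1 G \<subseteq> lp G p} \<subseteq> {p. p > 0 \<and> T1 H \<subseteq> lp H p}"
    using T1_subset_lp_quotient[OF assms(4)] by blast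
  then show ?thesis
    unfolding Lit_def by (rule INF_superset_mono) simp
qed

end
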